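(* Let $R$ be an exchange ring in which $2$ is invertible, and let $a\in R$ be such that $a-a^3$ is regular. If the right $R$-modules $aR/ar(a^2)$ and $R/\big(aR+r(a)\big)$ are projective, then $(a-a^3)R\oplus ar(a^2)\cong (a-a^3)R\oplus R/\big(aR+r(a)\big)$ as right $R$-modules.
   Context: All rings are associative with identity; modules are right modules. An element $x\in R$ is regular if $x=xyx$ for some $y\in R$. $R$ is an exchange ring if for every $x\in R$ there is an idempotent $e\in xR$ with $1-e\in(1-x)R$. For $x\in R$, $r(x)=\{y\in R: xy=0\}$, and $ar(a^2)=\{ay: y\in r(a^2)\}$. *)

theory Defs
  imports Main
begin

text \<open>Rings: the whole type 'a, class {ring, monoid_mult} (associative, with identity;
 the zero ring is not excluded). Right modules are explicit records.\<close>

definition regular :: "'a::{ring,monoid_mult} \<Rightarrow> bool" where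
  "regular x \<longleftrightarrow> (\<exists>y. x = x * y * x)"

definition exchange_ring :: "'a::{ring,monoid_mult} itself \<Rightarrow> bool" where
  "exchange_ring _ \<longleftrightarrow> (\<forall>x::'a. \<exists>e. e * e = e \<and> e \<in> range ((*) x) \<and> 1 - e \<in> range ((*) (1 - x)))"

definition rann :: "'a::{ring,monoid_mult} \<Rightarrow> 'a set" where
  "rann x = {y. x * y = 0}"

definition a_rann_sq :: "'a::{ring,monoid_mult} \<Rightarrow> 'a set" where
  "a_rann_sq a = (\<lambda>y. a * y) ` rann (a * a)"

definition set_plus_r :: "'a::{ring,monoid_mult} set \<Rightarrow> 'a set \<Rightarrow> 'a set" where
  "set_plus_r A B = {u + v | u v. u \<in> A \<and> v \<in> B}"

record ('a, 'm) rmod =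
  rm_carrier :: "'m set"
  rm_add :: "'m \<Rightarrow> 'm \<Rightarrow> 'm"
  rm_zero :: "'m"
  rm_smul :: "'m \<Rightarrow> 'a \<Rightarrow> 'm"

definition rmodule :: "('a::{ring,monoid_mult}, 'm) rmod \<Rightarrow> bool" where
  "rmodule M \<longleftrightarrow>
     rm_zero M \<in> rm_carrier M \<and>
     (\<forall>x\<in>rm_carrier M. \<forall>y\<in>rm_carrier M. rm_add M x y \<in> rm_carrier M) \<and>
     (\<forall>x\<in>rm_carrier M. \<forall>r. rm_smul M x r \<in> rm_carrier M) \<and>
     (\<forall>x\<in>rm_carrier M. \<forall>y\<in>rm_carrier M. \<forall>z\<in>rm_carrier M.
        rm_add M (rm_add M x y) z = rm_add M x (rm_add M y z)) \<and>
     (\<forall>x\<in>rm_carrier M. \<forall>y\<in>rm_carrier M. rm_add M x y = rm_add M y x) \<and>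
     (\<forall>x\<in>rm_carrier M. rm_add M (rm_zero M) x = x) \<and>
     (\<forall>x\<in>rm_carrier M. \<exists>y\<in>rm_carrier M. rm_add M x y = rm_zero M) \<and>
     (\<forall>x\<in>rm_carrier M. \<forall>r s. rm_smul M x (r + s) = rm_add M (rm_smul M x r) (rm_smul M x s)) \<and>
     (\<forall>x\<in>rm_carrier M. \<forall>y\<in>rm_carrier M. \<forall>r.
        rm_smul M (rm_add M x y) r = rm_add M (rm_smul M x r) (rm_smul M y r)) \<and>
     (\<forall>x\<in>rm_carrier M. \<forall>r s. rm_smul M x (r * s) = rm_smul M (rm_smul M x r) s) \<and>
     (\<forall>x\<in>rm_carrier M. rm_smul M x 1 = x)"

definition rlinear :: "('a::{ring,monoid_mult}, 'm) rmod \<Rightarrow> ('a, 'n) rmod \<Rightarrow> ('m \<Rightarrow> 'n) \<Rightarrow> bool" where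
  "rlinear M N f \<longleftrightarrow>
     (\<forall>x\<in>rm_carrier M. f x \<in> rm_carrier N) \<and>
     (\<forall>x\<in>rm_carrier M. \<forall>y\<in>rm_carrier M. f (rm_add M x y) = rm_add N (f x) (f y)) \<and>
     (\<forall>x\<in>rm_carrier M. \<forall>r. f (rm_smul M x r) = rm_smul N (f x) r)"

definition riso :: "('a::{ring,monoid_mult}, 'm) rmod \<Rightarrow> ('a, 'n) rmod \<Rightarrow> bool" where
  "riso M N \<longleftrightarrow> (\<exists>f. rlinear M N f \<and> bij_betw f (rm_carrier M) (rm_carrier N))"

text \<open>Domains range over
 modules whose carrier lives in type 'm => 'a, large enough to contain the free module
 on the carrier of M, so this is equivalent to the usual notion.\<close>
definition rprojective :: "('a::{ring,monoid_mult}, 'm) rmod \<Rightarrow> bool" where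
  "rprojective M \<longleftrightarrow> rmodule M \<and>
     (\<forall>(N :: ('a, 'm \<Rightarrow> 'a) rmod) g.
        rmodule N \<and> rlinear N M g \<and> g ` rm_carrier N = rm_carrier M \<longrightarrow>
        (\<exists>h. rlinear M N h \<and> (\<forall>x\<in>rm_carrier M. g (h x) = x)))"

definition submod :: "'a::{ring,monoid_mult} set \<Rightarrow> ('a, 'a) rmod" where
  "submod I = \<lparr> rm_carrier = I, rm_add = (+), rm_zero = 0, rm_smul = (*) \<rparr>"

text \<open>Quotient I/J (J \<subseteq> I right ideals): elements are cosets x + J, x in I.\<close>
definition quotmod :: "'a::{ring,monoid_mult} set \<Rightarrow> 'a set \<Rightarrow> ('a, 'a set) rmod" where
  "quotmod I J = \<lparr> rm_carrier = (\<lambda>x. (\<lambda>j. x + j) ` J) ` I,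
                   rm_add = (\<lambda>A B. {x + y | x y. x \<in> A \<and> y \<in> B}),
                   rm_zero = J,
                   rm_smul = (\<lambda>A r. {y * r + j | y j. y \<in> A \<and> j \<in> J}) \<rparr>"

definition dsum :: "('a, 'm) rmod \<Rightarrow> ('a, 'n) rmod \<Rightarrow> ('a, 'm \<times> 'n) rmod" where
  "dsum M N = \<lparr> rm_carrier = rm_carrier M \<times> rm_carrier N,
                rm_add = (\<lambda>(x1, y1) (x2, y2). (rm_add M x1 x2, rm_add N y1 y2)),
                rm_zero = (rm_zero M, rm_zero N),
                rm_smul = (\<lambda>(x, y) r. (rm_smul M x r, rm_smul N y r)) \<rparr>"

end

theory Submission
  imports Defs
begin

text \<open>Write \<open>J = aR + r(a)\<close> and \<open>b = a - a\<^sup>3 = a(1 - a\<^sup>2)\<close>, which commutes with \<open>a\<close>.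
  Projectivity of the cyclic module \<open>R/J\<close> splits \<open>R \<rightarrow> R/J\<close>, giving an idempotent \<open>t\<close> with
  \<open>J = r(t)\<close>, so \<open>R/J \<cong> tR\<close>. Left multiplication by \<open>a\<close> maps \<open>bR\<close> onto \<open>abR\<close> with kernel
  \<open>K = {z \<in> bR. az = 0} = a r(a\<^sup>2)\<close>. With an inner inverse \<open>c\<close> of \<open>b\<close> and \<open>1 - t = au + v\<close>,
  \<open>v \<in> r(a)\<close>, the element \<open>s = buc\<close> gives a section \<open>w \<mapsto> sw\<close> of it on \<open>abR\<close>, so
  \<open>bR = s(abR) \<oplus> K\<close>; and \<open>x \<mapsto> asx\<close> is a projection of \<open>bR\<close> onto \<open>abR\<close> whose kernel is carried
  isomorphically onto \<open>tR\<close> by \<open>x \<mapsto> tcx\<close>. Hence \<open>(x, k) \<mapsto> (s(asx) + k, tcx)\<close> is an isomorphism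
  \<open>bR \<oplus> K \<cong> bR \<oplus> tR \<cong> bR \<oplus> R/J\<close>.\<close>

lemma riso_by_inverse:
  assumes "rlinear M N f" and "g ` rm_carrier N \<subseteq> rm_carrier M"
    and "\<And>x. x \<in> rm_carrier M \<Longrightarrow> g (f x) = x"
    and "\<And>y. y \<in> rm_carrier N \<Longrightarrow> f (g y) = y"
  shows "riso M N"
proof -
  have "bij_betw f (rm_carrier M) (rm_carrier N)"
    using assms by (intro bij_betw_byWitness[where f' = g]) (auto simp: rlinear_def)
  then show ?thesis
    using assms(1) unfolding riso_def by blast
qed

lemma riso_trans:
  assumes "riso M N" and "riso N P"
  shows "riso M P"
proof -
  obtain f g where f: "rlinear M N f" "bij_betw f (rm_carrier M) (rm_carrier N)"
    and g: "rlinear N P g" "bij_betw g (rm_carrier N) (rm_carrier P)"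
    using assms unfolding riso_def by blast
  have "rlinear M P (g \<circ> f)"
    using f(1) g(1) unfolding rlinear_def by auto
  moreover have "bij_betw (g \<circ> f) (rm_carrier M) (rm_carrier P)"
    using f(2) g(2) by (rule bij_betw_trans)
  ultimately show ?thesis
    unfolding riso_def by blast
qed

lemma riso_dsum_right:
  assumes "riso N N'"
  shows "riso (dsum M N) (dsum M N')"
proof -
  obtain f where f: "rlinear N N' f" "bij_betw f (rm_carrier N) (rm_carrier N')"
    using assms unfolding riso_def by blast
  have "rlinear (dsum M N) (dsum M N') (map_prod id f)"
    using f(1) unfolding rlinear_def dsum_def by auto
  moreover have "bij_betw (map_prod id f) (rm_carrier (dsum M N)) (rm_carrier (dsum M N'))"
    using bij_betw_map_prod[OF bij_betw_id f(2)] by (simp add: dsum_def)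
  ultimately show ?thesis
    unfolding riso_def by blast
qed

definition right_ideal :: "'a::{ring,monoid_mult} set \<Rightarrow> bool" where
  "right_ideal I \<longleftrightarrow> 0 \<in> I \<and> (\<forall>x\<in>I. \<forall>y\<in>I. x - y \<in> I) \<and> (\<forall>x\<in>I. \<forall>r. x * r \<in> I)"

lemma right_ideal_add:
  assumes "right_ideal I" "x \<in> I" "y \<in> I"
  shows "x + y \<in> I"
proof -
  have "0 - y \<in> I"
    using assms unfolding right_ideal_def by blast
  then have "x - (0 - y) \<in> I"
    using assms unfolding right_ideal_def by blast
  then show ?thesis
    by simp
qed

definition coset :: "'a::{ring,monoid_mult} set \<Rightarrow> 'a \<Rightarrow> 'a set" where
  "coset I x = (\<lambda>j. x + j) ` I"

lemma coset_self:
  assumes "right_ideal I"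
  shows "x \<in> coset I x"
  using assms unfolding right_ideal_def coset_def by force

lemma coset_subset:
  assumes "right_ideal I" and "x - y \<in> I"
  shows "coset I x \<subseteq> coset I y"
proof
  fix p assume "p \<in> coset I x"
  then obtain j where "j \<in> I" "p = y + ((x - y) + j)"
    unfolding coset_def by (auto simp: algebra_simps)
  then show "p \<in> coset I y"
    using right_ideal_add[OF assms] unfolding coset_def by blast
qed

lemma coset_eq_iff:
  assumes "right_ideal I"
  shows "coset I x = coset I y \<longleftrightarrow> x - y \<in> I"
proof
  assume "coset I x = coset I y"
  moreover have "x \<in> coset I x"
    using assms by (rule coset_self)
  ultimately obtain j where "j \<in> I" "x = y + j"
    unfolding coset_def by auto
  then show "x - y \<in> I"
    by simp
next
  assume "x - y \<in> I"
  moreover have "y - x \<in> I"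
    using assms calculation unfolding right_ideal_def by (metis diff_0 minus_diff_eq)
  ultimately show "coset I x = coset I y"
    using coset_subset[OF assms] by blast
qed

lemma quotmod_carrier: "rm_carrier (quotmod A I) = coset I ` A"
  by (simp add: quotmod_def coset_def)

lemma quotmod_add:
  assumes "right_ideal I"
  shows "rm_add (quotmod A I) (coset I x) (coset I y) = coset I (x + y)"
proof -
  have "p + q \<in> coset I (x + y)" if pq: "p \<in> coset I x" "q \<in> coset I y" for p q
  proof -
    obtain j k where "j \<in> I" "k \<in> I" "p = x + j" "q = y + k"
      using pq by (auto simp: coset_def)
    moreover from this have "p + q = (x + y) + (j + k)"
      by (simp add: algebra_simps)
    ultimately show ?thesis
      using right_ideal_add[OF assms] unfolding coset_def by blast
  qed
  moreover have "z \<in> {p + q |p q. p \<in> coset I x \<and> q \<in> coset I y}" if z: "z \<in> coset I (x + y)" for z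
  proof -
    obtain j where "j \<in> I" "z = (x + j) + y"
      using z unfolding coset_def by (auto simp: algebra_simps)
    then show ?thesis
      using coset_self[OF assms, of y] unfolding coset_def by blast
  qed
  ultimately show ?thesis
    by (auto simp: quotmod_def)
qed

lemma quotmod_smul:
  assumes "right_ideal I"
  shows "rm_smul (quotmod A I) (coset I x) r = coset I (x * r)"
proof -
  have "p * r + j \<in> coset I (x * r)" if p: "p \<in> coset I x" and j: "j \<in> I" for p j
  proof -
    obtain k where "k \<in> I" "p = x + k"
      using p by (auto simp: coset_def)
    then have "p * r + j = x * r + (k * r + j)"
      by (simp add: algebra_simps)
    moreover have "k * r + j \<in> I"
      using assms \<open>k \<in> I\<close> j right_ideal_add unfolding right_ideal_def by blast
    ultimately show ?thesis
      unfolding coset_def by blast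
  qed
  moreover have "z \<in> {p * r + j |p j. p \<in> coset I x \<and> j \<in> I}" if "z \<in> coset I (x * r)" for z
    using that coset_self[OF assms, of x] unfolding coset_def by blast
  ultimately show ?thesis
    by (auto simp: quotmod_def)
qed

text \<open>\<open>R\<^sub>R\<close>, each \<open>r\<close> represented by the constant function \<open>\<lambda>_. r\<close>: the definition of
  \<open>rprojective\<close> only tests against modules whose carrier lives in a function type.\<close>

definition regular_rmod :: "('a::{ring,monoid_mult}, 'm \<Rightarrow> 'a) rmod" where
  "regular_rmod = \<lparr> rm_carrier = range (\<lambda>r _. r), rm_add = (\<lambda>f g x. f x + g x),
                    rm_zero = (\<lambda>_. 0), rm_smul = (\<lambda>f r x. f x * r) \<rparr>"

lemma rmodule_regular_rmod: "rmodule regular_rmod"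
proof -
  have "\<forall>x::'a. \<exists>y. (\<lambda>_::'m. x + y) = (\<lambda>_. 0)"
    by (metis add.right_inverse)
  then show ?thesis
    unfolding rmodule_def regular_rmod_def by (simp add: algebra_simps)
qed

lemma rprojectiveD:
  fixes M :: "('a::{ring,monoid_mult}, 'm) rmod" and N :: "('a, 'm \<Rightarrow> 'a) rmod"
  assumes "rprojective M" and "rmodule N" and "rlinear N M g" and "g ` rm_carrier N = rm_carrier M"
  shows "\<exists>h. rlinear M N h \<and> (\<forall>x\<in>rm_carrier M. g (h x) = x)"
proof -
  have "\<forall>(N :: ('a, 'm \<Rightarrow> 'a) rmod) g. rmodule N \<and> rlinear N M g \<and> g ` rm_carrier N = rm_carrier M \<longrightarrow>
          (\<exists>h. rlinear M N h \<and> (\<forall>x\<in>rm_carrier M. g (h x) = x))"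
    using assms(1) unfolding rprojective_def by (rule conjunct2)
  then show ?thesis
    using assms(2-4) by simp
qed

lemma projective_quotient_idempotent:
  fixes I :: "'a::{ring,monoid_mult} set"
  assumes I: "right_ideal I" and proj: "rprojective (quotmod UNIV I)"
  shows "\<exists>t. (\<forall>j\<in>I. t * j = 0) \<and> 1 - t \<in> I"
proof -
  let ?Q = "quotmod UNIV I"
  define g :: "('a set \<Rightarrow> 'a) \<Rightarrow> 'a set" where "g f = coset I (f undefined)" for f
  have lin: "rlinear regular_rmod ?Q g"
    unfolding rlinear_def g_def regular_rmod_def
    by (simp add: quotmod_carrier quotmod_add[OF I] quotmod_smul[OF I])
  have surj: "g ` rm_carrier regular_rmod = rm_carrier ?Q"
    by (simp add: g_def regular_rmod_def quotmod_carrier image_image)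
  obtain h where h: "rlinear ?Q regular_rmod h" and gh: "\<And>X. X \<in> rm_carrier ?Q \<Longrightarrow> g (h X) = X"
    using rprojectiveD[OF proj rmodule_regular_rmod lin surj] by blast
  have "h (coset I 1) \<in> rm_carrier regular_rmod"
    using h unfolding rlinear_def by (simp add: quotmod_carrier)
  then obtain t where t: "h (coset I 1) = (\<lambda>_. t)"
    by (auto simp: regular_rmod_def)
  have h_coset: "h (coset I x) = (\<lambda>_. t * x)" for x
  proof -
    have "h (coset I x) = h (rm_smul ?Q (coset I 1) x)"
      by (simp add: quotmod_smul[OF I])
    also have "\<dots> = rm_smul regular_rmod (h (coset I 1)) x"
      using h unfolding rlinear_def by (simp add: quotmod_carrier)
    finally show ?thesis
      by (simp add: t regular_rmod_def)
  qed
  have "coset I t = coset I 1"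
    using gh[of "coset I 1"] by (simp add: h_coset g_def quotmod_carrier)
  then have "- (t - 1) \<in> I"
    using I coset_eq_iff unfolding right_ideal_def by (metis diff_0)
  moreover have "t * j = 0" if "j \<in> I" for j
  proof -
    have "coset I j = coset I 0"
      using that by (simp add: coset_eq_iff[OF I])
    then show ?thesis
      using h_coset[of j] h_coset[of 0] by (metis mult_zero_right)
  qed
  ultimately show ?thesis
    by auto
qed

lemma right_ideal_eq_rann:
  assumes I: "right_ideal I" and ann: "\<forall>j\<in>I. t * j = 0" and comp: "1 - t \<in> I"
  shows "I = rann t"
proof
  show "I \<subseteq> rann t"
    using ann by (auto simp: rann_def)
  show "rann t \<subseteq> I"
  proof
    fix x assume "x \<in> rann t"
    then have "x = (1 - t) * x"
      by (simp add: rann_def algebra_simps)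
    then show "x \<in> I"
      using I comp unfolding right_ideal_def by metis
  qed
qed

lemma riso_idempotent_quotient:
  assumes I: "right_ideal I" and ann: "\<forall>j\<in>I. t * j = 0" and comp: "1 - t \<in> I"
  shows "riso (submod (range ((*) t))) (quotmod UNIV I)"
proof -
  have I_eq: "I = rann t"
    using right_ideal_eq_rann[OF assms] .
  then have t_idem: "t * t = t"
    using comp by (simp add: rann_def algebra_simps)
  have "rlinear (submod (range ((*) t))) (quotmod UNIV I) (coset I)"
    unfolding rlinear_def
    by (simp add: submod_def quotmod_carrier quotmod_add[OF I] quotmod_smul[OF I])
  moreover have "inj_on (coset I) (range ((*) t))"
  proof (rule inj_onI)
    fix x y assume "x \<in> range ((*) t)" "y \<in> range ((*) t)" "coset I x = coset I y"
    then obtain p q where "x = t * p" "y = t * q" "t * (x - y) = 0"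
      using I_eq coset_eq_iff[OF I] by (auto simp: rann_def)
    then show "x = y"
      using t_idem by (simp add: right_diff_distrib mult.assoc[symmetric])
  qed
  moreover have "coset I ` range ((*) t) = range (coset I)"
  proof -
    have "coset I (t * x) = coset I x" for x
      using coset_eq_iff[OF I] I_eq t_idem by (simp add: rann_def right_diff_distrib mult.assoc[symmetric])
    then show ?thesis
      by (simp add: image_image)
  qed
  ultimately show ?thesis
    unfolding riso_def by (auto simp: submod_def quotmod_carrier intro: bij_betw_imageI)
qed

lemma mem_aR_plus_rann_iff:
  "x \<in> set_plus_r (range ((*) a)) (rann a) \<longleftrightarrow> (\<exists>p q. x = a * p + q \<and> a * q = 0)"
  by (auto simp: set_plus_r_def rann_def)

lemma right_ideal_aR_plus_rann: "right_ideal (set_plus_r (range ((*) a)) (rann a))"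
proof -
  let ?J = "set_plus_r (range ((*) a)) (rann a)"
  have "x - y \<in> ?J" if "x \<in> ?J" "y \<in> ?J" for x y
  proof -
    obtain p q p' q' where "x = a * p + q" "a * q = 0" "y = a * p' + q'" "a * q' = 0"
      using \<open>x \<in> ?J\<close> \<open>y \<in> ?J\<close> unfolding mem_aR_plus_rann_iff by blast
    then have "x - y = a * (p - p') + (q - q')" "a * (q - q') = 0"
      by (simp_all add: algebra_simps)
    then show ?thesis
      unfolding mem_aR_plus_rann_iff by blast
  qed
  moreover have "x * r \<in> ?J" if "x \<in> ?J" for x r
  proof -
    obtain p q where pq: "x = a * p + q" "a * q = 0"
      using \<open>x \<in> ?J\<close> unfolding mem_aR_plus_rann_iff by blast
    then have "x * r = a * (p * r) + q * r"
      by (simp add: distrib_right mult.assoc)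
    moreover have "a * (q * r) = 0"
      using pq by (simp flip: mult.assoc)
    ultimately show ?thesis
      unfolding mem_aR_plus_rann_iff by blast
  qed
  moreover have "0 \<in> ?J"
    unfolding mem_aR_plus_rann_iff by (intro exI[of _ 0]) simp
  ultimately show ?thesis
    unfolding right_ideal_def by blast
qed

lemma a_rann_sq_eq: "a_rann_sq a = {z \<in> range ((*) (a - a * a * a)). a * z = 0}"
proof (intro set_eqI iffI)
  fix z assume "z \<in> a_rann_sq a"
  then obtain y where y: "z = a * y" "a * a * y = 0"
    by (auto simp: a_rann_sq_def rann_def)
  then have "z = (a - a * a * a) * y"
    by (simp add: algebra_simps)
  moreover have "a * z = 0"
    using y by (simp add: mult.assoc)
  ultimately show "z \<in> {z \<in> range ((*) (a - a * a * a)). a * z = 0}"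
    by auto
next
  fix z assume "z \<in> {z \<in> range ((*) (a - a * a * a)). a * z = 0}"
  then obtain y where y: "z = (a - a * a * a) * y" "a * z = 0"
    by auto
  then have "z = a * ((1 - a * a) * y)"
    by (simp add: algebra_simps)
  moreover from this have "a * a * ((1 - a * a) * y) = 0"
    using y by (simp add: mult.assoc)
  ultimately show "z \<in> a_rann_sq a"
    by (auto simp: a_rann_sq_def rann_def)
qed

locale regular_cube_split =
  fixes a b c t u v :: "'a::{ring,monoid_mult}"
  assumes b_eq: "b = a - a * a * a"
    and inner_inverse: "b * c * b = b"
    and t_mult_a: "t * a = 0"
    and t_mult_rann: "\<And>q. a * q = 0 \<Longrightarrow> t * q = 0"
    and one_minus_t: "1 - t = a * u + v"
    and a_mult_v: "a * v = 0"
begin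

definition sect :: 'a where
  "sect = b * u * c"

lemma a_mult_b_commute: "a * (b * y) = b * (a * y)"
  unfolding b_eq by (simp add: algebra_simps)

lemma b_eq_a_mult: "b * y = a * ((1 - a * a) * y)"
  unfolding b_eq by (simp add: algebra_simps)

lemma t_idem: "t * (t * x) = t * x"
proof -
  have "t * (1 - t) = (t * a) * u + t * v"
    by (simp add: one_minus_t distrib_left mult.assoc)
  then have "t * t = t"
    using t_mult_a t_mult_rann[OF a_mult_v] by (simp add: right_diff_distrib)
  then show ?thesis
    by (metis mult.assoc)
qed

lemma b_mult_v: "b * v = 0"
  unfolding b_eq by (simp add: left_diff_distrib mult.assoc a_mult_v)

lemma sect_mult: "sect * x = b * (u * (c * x))"
  by (simp add: sect_def mult.assoc)

lemma b_mult_split: "b * y = b * (t * y) + a * (b * (u * y))"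
proof -
  have "y = t * y + a * (u * y) + v * y"
    using arg_cong[OF one_minus_t, of "\<lambda>z. z * y"] by (simp add: algebra_simps)
  then have "b * y = b * (t * y) + b * (a * (u * y)) + (b * v) * y"
    by (metis distrib_left mult.assoc)
  then show ?thesis
    by (simp add: b_mult_v a_mult_b_commute)
qed

text \<open>If \<open>b t x = a b y\<close> then \<open>m = (1 - a\<^sup>2) t x - b y\<close> lies in \<open>r(a)\<close>, so
  \<open>t x = m + b y + a (a t x) \<in> aR + r(a)\<close>, which \<open>t\<close> annihilates; hence \<open>t x = t (t x) = 0\<close>.\<close>

lemma t_eq_0_if_bt_in_abR:
  assumes "b * (t * x) = a * (b * y)"
  shows "t * x = 0"
proof -
  define m where "m = (1 - a * a) * (t * x) - b * y"
  have "a * m = 0"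
    using assms b_eq_a_mult[of "t * x"] by (simp add: m_def right_diff_distrib mult.assoc)
  have decomp: "t * x = m + a * ((1 - a * a) * y) + a * (a * (t * x))"
    unfolding m_def b_eq_a_mult by (simp add: algebra_simps)
  have "t * (t * x) = t * m + (t * a) * ((1 - a * a) * y) + (t * a) * (a * (t * x))"
    by (subst decomp) (simp add: distrib_left mult.assoc)
  then show ?thesis
    using t_mult_rann[OF \<open>a * m = 0\<close>] t_mult_a t_idem by simp
qed

lemma bR_split: "b * y = b * (t * (c * (b * y))) + a * (sect * (b * y))"
proof -
  have "b * y = b * (c * (b * y))"
    by (metis inner_inverse mult.assoc)
  also have "\<dots> = b * (t * (c * (b * y))) + a * (sect * (b * y))"
    by (subst b_mult_split) (simp add: sect_mult)
  finally show ?thesis .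
qed

lemma tc_abR_eq_0: "t * (c * (a * (b * y))) = 0"
proof (rule t_eq_0_if_bt_in_abR)
  let ?w = "a * (b * y)"
  have "?w = b * (t * (c * ?w)) + a * (sect * ?w)"
    using bR_split[of "a * y"] by (simp add: a_mult_b_commute)
  then show "b * (t * (c * ?w)) = a * (b * (y - u * (c * ?w)))"
    by (simp add: sect_mult algebra_simps)
qed

lemma a_sect_on_abR: "a * (sect * (a * (b * y))) = a * (b * y)"
  using bR_split[of "a * y"] tc_abR_eq_0[of y] by (simp add: a_mult_b_commute)

lemma a_sect_idem: "a * (sect * (a * (sect * x))) = a * (sect * x)"
  using a_sect_on_abR[of "u * (c * x)"] by (simp add: sect_mult)

lemma tcbt_eq_t: "t * (c * (b * (t * x))) = t * x"
proof -
  let ?z = "b * (t * x)"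
  have "t * (c * ?z - x) = 0"
  proof (rule t_eq_0_if_bt_in_abR)
    have "?z = b * (t * (c * ?z)) + a * (sect * ?z)"
      by (rule bR_split)
    then show "b * (t * (c * ?z - x)) = a * (b * (- (u * (c * ?z))))"
      by (simp add: sect_mult algebra_simps)
  qed
  then show ?thesis
    by (simp add: right_diff_distrib)
qed

lemma riso_dsum_annihilator_idempotent:
  "riso (dsum (submod (range ((*) b))) (submod {z \<in> range ((*) b). a * z = 0}))
        (dsum (submod (range ((*) b))) (submod (range ((*) t))))"
    (is "riso ?M ?N")
proof -
  define F where "F = (\<lambda>(x, k). (sect * (a * (sect * x)) + k, t * (c * x)))"
  define G where "G = (\<lambda>(y, w). (a * y + b * w, y - sect * (a * y)))"
  have "rlinear ?M ?N F"
  proof -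
    have "sect * (a * (sect * x)) + b * y \<in> range ((*) b)" for x y
      by (rule range_eqI[of _ _ "u * (c * (a * (sect * x))) + y"]) (simp add: sect_mult distrib_left)
    then show ?thesis
      unfolding rlinear_def F_def by (auto simp: dsum_def submod_def algebra_simps)
  qed
  moreover have "G ` rm_carrier ?N \<subseteq> rm_carrier ?M"
  proof -
    have "G (b * y, t * x) \<in> rm_carrier ?M" for y x
    proof -
      have "a * (b * y) + b * (t * x) = b * (a * y + t * x)"
        by (simp add: a_mult_b_commute distrib_left)
      moreover have "b * y - sect * (a * (b * y)) = b * (y - u * (c * (a * (b * y))))"
        by (simp add: sect_mult right_diff_distrib)
      moreover have "a * (b * y - sect * (a * (b * y))) = 0"
        using a_sect_on_abR by (simp add: right_diff_distrib)
      ultimately show ?thesis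
        unfolding G_def by (auto simp: dsum_def submod_def)
    qed
    then show ?thesis
      by (auto simp: dsum_def submod_def image_subset_iff simp del: mem_Sigma_iff)
  qed
  moreover have "G (F p) = p" if p_in: "p \<in> rm_carrier ?M" for p
  proof -
    obtain y k where p: "p = (b * y, k)" and "a * k = 0"
      using p_in by (auto simp: dsum_def submod_def)
    have "a * (sect * (a * (sect * (b * y))) + k) = a * (sect * (b * y))"
      using a_sect_idem \<open>a * k = 0\<close> by (simp add: distrib_left)
    then show ?thesis
      using bR_split[of y] by (simp add: p F_def G_def add.commute)
  qed
  moreover have "F (G q) = q" if q_in: "q \<in> rm_carrier ?N" for q
  proof -
    obtain y x where q: "q = (b * y, t * x)"
      using q_in by (auto simp: dsum_def submod_def)
    define z where "z = a * (b * y) + b * (t * x)"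
    have tcz: "t * (c * z) = t * x"
      using tc_abR_eq_0[of y] tcbt_eq_t[of x] by (simp add: z_def distrib_left)
    have zb: "z = b * (a * y + t * x)"
      by (simp add: z_def a_mult_b_commute distrib_left)
    have "z = b * (t * (c * z)) + a * (sect * z)"
      using bR_split[of "a * y + t * x"] by (simp only: zb[symmetric])
    then have "a * (sect * z) = a * (b * y)"
      using tcz by (simp add: z_def)
    then show ?thesis
      using tcz by (simp add: q F_def G_def z_def[symmetric])
  qed
  ultimately show ?thesis
    by (rule riso_by_inverse)
qed

end

theorem lemma3p3:
  fixes a :: "'a::{ring,monoid_mult}"
  assumes "exchange_ring TYPE('a)"
    and "\<exists>u::'a. (1 + 1) * u = 1 \<and> u * (1 + 1) = 1"
    and "regular (a - a * a * a)"
    and "rprojective (quotmod (range ((*) a)) (a_rann_sq a))"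
    and "rprojective (quotmod UNIV (set_plus_r (range ((*) a)) (rann a)))"
  shows "riso (dsum (submod (range ((*) (a - a * a * a)))) (submod (a_rann_sq a)))
              (dsum (submod (range ((*) (a - a * a * a))))
                    (quotmod UNIV (set_plus_r (range ((*) a)) (rann a))))"
proof -
  let ?b = "a - a * a * a" and ?J = "set_plus_r (range ((*) a)) (rann a)"
  obtain c where c: "?b * c * ?b = ?b"
    using assms(3) unfolding regular_def by metis
  obtain t where t_ann: "\<forall>j\<in>?J. t * j = 0" and t_comp: "1 - t \<in> ?J"
    using projective_quotient_idempotent[OF right_ideal_aR_plus_rann assms(5)] by blast
  obtain u v where uv: "1 - t = a * u + v" "a * v = 0"
    using t_comp unfolding mem_aR_plus_rann_iff by blast
  have "a \<in> ?J"
    unfolding mem_aR_plus_rann_iff by (intro exI[of _ 1] exI[of _ 0]) simp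
  moreover have "q \<in> ?J" if "a * q = 0" for q
    unfolding mem_aR_plus_rann_iff using that by (intro exI[of _ 0] exI[of _ q]) simp
  ultimately interpret regular_cube_split a ?b c t u v
    by unfold_locales (simp_all add: c uv t_ann)
  have "riso (dsum (submod (range ((*) ?b))) (submod (range ((*) t))))
             (dsum (submod (range ((*) ?b))) (quotmod UNIV ?J))"
    using riso_idempotent_quotient[OF right_ideal_aR_plus_rann t_ann t_comp] by (rule riso_dsum_right)
  with riso_dsum_annihilator_idempotent show ?thesis
    unfolding a_rann_sq_eq by (rule riso_trans)
qed

end
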